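(* Let $k>1$ and let $\varphi$ be as in the context. If $M,N\models\varphi$, $M$ is a substructure of $N$, and $N$ has a solution, then $M$ has a solution.
   Context: Fix a natural number $k>1$. $Z_2=\{0,1\}$ is the two-element group. The language $\mathcal{L}$ consists of: unary predicates $I,K,R,P,G^a,H^a$; binary predicates $\in$ and $H^b$; ternary predicates $\pi,\rho,+,G^b$; a 4-ary predicate $h$; a 5-ary predicate $g$; a $(k+1)$-ary predicate $Q_l$ for each $l<\omega$; and constants $c_a$ for each $a\in Z_2\cup\omega$. $K(M),I(M)$ denote the interpretations of $K,I$ in $M$. $T$ is the collection of the following conditions on an $\mathcal{L}$-structure: (1) $I$ is infinite, $K$ is (identified via $\in$ with) the collection of $k$-element subsets of $I$, and $\in$ is membership between elements of $I$ and of $K$. (2) $I,K,R,G^a,H^a$ are pairwise disjoint and their union with the constants $c_a$, $a\in Z_2$, is $P$. (3) $R(c_a)$ for every $a\in\omega$. (4) $G^b(l,u,x)$ implies $R(l)$, $K(u)$; $H^b(u,x)$ implies $K(u)$. (5) If $x\notin P$ then $G^b(l,u,x)$ for some $l,u$ or $H^b(u,x)$ for some $u$; for all $l\in R$, $u,v\in K$, the sets $P$, $H^b(u,-)$, $G^b(l,v,-)$ are pairwise disjoint. (6) $\pi(u,a,z)$ implies $K(u)$, $G^a(a)$, $z$ a constant indexed by $Z_2$. (7) $\rho(l,b,z)$ implies $R(l)$, $H^a(b)$, $z$ a constant indexed by $Z_2$. (8) $g(l,u,a,v,w)$ implies $R(l),K(u),G^a(a),G^b(l,u,v),G^b(l,u,w)$.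 (9) $h(u,b,x,y)$ implies $K(u),H^a(b),H^b(u,x),H^b(u,y)$. (10) The constants $c_a$, $a\in Z_2$, with $+$ form a copy of $Z_2$. (11) $+$ on $G^a$ gives a subgroup of $\prod_K Z_2$ containing $\coprod_K Z_2$, projections given by $\pi$. (12) $+$ on $H^a$ gives a subgroup of $\prod_R Z_2$ containing $\coprod_R Z_2$, projections given by $\rho$. (13) For $l\in R,u\in K$, $G^b(l,u,-)\neq\emptyset$, and for each $x$ with $G^b(l,u,x)$, $g(l,u,-,x,-)$ is a bijection from $G^a$ onto $G^b(l,u,-)$; $g(l,u,x,y,z)\Rightarrow g(l,u,x,z,y)$; $g(l,u,a,x,y)\wedge g(l,u,b,y,z)\Rightarrow g(l,u,a+b,x,z)$. (14) For $u\in K$, $H^b(u,-)\ne\emptyset$, and for each $x$ with $H^b(u,x)$, $h(u,-,x,-)$ is a bijection from $H^a$ onto $H^b(u,-)$; $h(u,x,y,z)\Rightarrow h(u,x,z,y)$; $h(u,a,x,y)\wedge h(u,b,y,z)\Rightarrow h(u,a+b,x,z)$. (15) If $Q_l(x_0,\dots,x_k)$ then $G^b(c_l,u_i,x_i)$ for some $u_i\in K$ ($i<k$), $H^b(u_k,x_k)$ for some $u_k\in K$, $u_0,\dots,u_k$ are all the $k$-element subsets of some $(k+1)$-element subset of $I$, and $Q_l(x_{\sigma(0)},\dots,x_{\sigma(k-1)},x_k)$ for every permutation $\sigma$ of $k$. (16) If $Q_l(x_0,\dots,x_k)$, $G^b(c_l,u,x_0)$, $H^b(v,x_k)$, $G^b(c_l,u,x_0')$,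 $H^b(v,x_k')$, then $Q_l(x_0',x_1,\dots,x_k)$ iff the $v$-projection via $\pi$ of the unique $a$ with $g(c_l,u,a,x_0,x_0')$ is $0$, and $Q_l(x_0,\dots,x_{k-1},x_k')$ iff the $c_l$-projection via $\rho$ of the unique $a$ with $h(v,a,x_k,x_k')$ is $0$. (17) For $l\in\omega$, $u\in K$, distinct $i_0,\dots,i_{n-1}\in I\setminus u$, with $v^j_1,\dots,v^j_k$ listing the $k$-subsets of $u\cup\{i_j\}$ other than $u$: if $G^b(c_l,v^j_i,x^j_i)$ ($j<n$, $1\le i<k$) and $H^b(v^j_k,y_j)$ ($j<n$), then $\exists x\bigwedge_{j<n}Q_l(x,x^j_1,\dots,x^j_{k-1},y_j)$. $\varphi$ is the $\mathcal{L}_{\omega_1\omega}$ sentence which is the conjunction of $T$ with: $R$ contains only the constants $c_l$, $l\in\omega$; $G^a$ is canonically isomorphic (via $\pi$) to $\coprod_K Z_2$; $H^a$ is canonically isomorphic (via $\rho$) to $\coprod_\omega Z_2$. Solutions: for $M\models T$, $W\subseteq(\omega\times K(M))\cup K(M)$ and $f:W\to M$, $f$ is a solution for $W$ if (i) $(l,u)\in W$ implies $M\models G^b(c_l,u,f(l,u))$; (ii) $u\in W$ implies $M\models H^b(u,f(u))$; (iii) whenever $u_0,\dots,u_k\in K(M)$ are all the $k$-element subsets of some $(k+1)$-element subset of $I(M)$, $(l,u_i)\in W$ for all $i<k$ and $u_k\in W$, then $M\models Q_l(f(l,u_0),\dots,f(l,u_{k-1}),f(u_k))$. $M$ has a solution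 if there is a solution for $(\omega\times K(M))\cup K(M)$. *)

theory Defs
  imports Main "HOL-Combinatorics.Permutations"
begin

text \<open>The universe is univ; all relations are only meaningful on
  elements of the universe. Z2 = {0,1} is represented by bool (False = 0, True = 1),
  addition in Z2 is (\<noteq>) (exclusive or). cz a is the constant c_a for a in Z2,
  cw l is the constant c_l for l in omega. Qr l is the (k+1)-ary predicate Q_l,
  applied to lists of length k+1.\<close>

record 'a Lstr =
  univ :: "'a set"
  Ir :: "'a \<Rightarrow> bool"
  Kr :: "'a \<Rightarrow> bool"
  Rr :: "'a \<Rightarrow> bool"
  Pr :: "'a \<Rightarrow> bool"
  Gar :: "'a \<Rightarrow> bool"
  Har :: "'a \<Rightarrow> bool"
  memr :: "'a \<Rightarrow> 'a \<Rightarrow> bool"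
  Hbr :: "'a \<Rightarrow> 'a \<Rightarrow> bool"
  pir :: "'a \<Rightarrow> 'a \<Rightarrow> 'a \<Rightarrow> bool"
  rhor :: "'a \<Rightarrow> 'a \<Rightarrow> 'a \<Rightarrow> bool"
  plusr :: "'a \<Rightarrow> 'a \<Rightarrow> 'a \<Rightarrow> bool"
  Gbr :: "'a \<Rightarrow> 'a \<Rightarrow> 'a \<Rightarrow> bool"
  hr :: "'a \<Rightarrow> 'a \<Rightarrow> 'a \<Rightarrow> 'a \<Rightarrow> bool"
  gr :: "'a \<Rightarrow> 'a \<Rightarrow> 'a \<Rightarrow> 'a \<Rightarrow> 'a \<Rightarrow> bool"
  Qr :: "nat \<Rightarrow> 'a list \<Rightarrow> bool"
  cz :: "bool \<Rightarrow> 'a"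
  cw :: "nat \<Rightarrow> 'a"

definition Iset :: "'a Lstr \<Rightarrow> 'a set" where
  "Iset M = {x \<in> univ M. Ir M x}"
definition Kset :: "'a Lstr \<Rightarrow> 'a set" where
  "Kset M = {x \<in> univ M. Kr M x}"
definition Rset :: "'a Lstr \<Rightarrow> 'a set" where
  "Rset M = {x \<in> univ M. Rr M x}"
definition Gaset :: "'a Lstr \<Rightarrow> 'a set" where
  "Gaset M = {x \<in> univ M. Gar M x}"
definition Haset :: "'a Lstr \<Rightarrow> 'a set" where
  "Haset M = {x \<in> univ M. Har M x}"
definition Pset :: "'a Lstr \<Rightarrow> 'a set" where
  "Pset M = {x \<in> univ M. Pr M x}"

definition mems :: "'a Lstr \<Rightarrow> 'a \<Rightarrow> 'a set" where
  "mems M u = {i \<in> univ M. memr M i u}"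

definition all_ksubsets :: "nat \<Rightarrow> 'a Lstr \<Rightarrow> (nat \<Rightarrow> 'a) \<Rightarrow> bool" where
  "all_ksubsets k M us \<longleftrightarrow>
     (\<forall>i\<le>k. us i \<in> Kset M) \<and>
     (\<exists>s. s \<subseteq> Iset M \<and> finite s \<and> card s = Suc k \<and>
          bij_betw (\<lambda>i. mems M (us i)) {..k} {t. t \<subseteq> s \<and> card t = k})"

definition projG :: "'a Lstr \<Rightarrow> 'a \<Rightarrow> 'a \<Rightarrow> bool" where
  "projG M u a \<longleftrightarrow> pir M u a (cz M True)"
definition projH :: "'a Lstr \<Rightarrow> 'a \<Rightarrow> 'a \<Rightarrow> bool" where
  "projH M l b \<longleftrightarrow> rhor M l b (cz M True)"

definition is_Z2const :: "'a Lstr \<Rightarrow> 'a \<Rightarrow> bool" where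
  "is_Z2const M z \<longleftrightarrow> z = cz M False \<or> z = cz M True"

definition fin_supp_on :: "'b set \<Rightarrow> ('b \<Rightarrow> bool) set" where
  "fin_supp_on A = {f. finite {x. f x} \<and> {x. f x} \<subseteq> A}"

definition models_T :: "nat \<Rightarrow> 'a Lstr \<Rightarrow> bool" where
  "models_T k M \<longleftrightarrow>
    \<comment> \<open>constants belong to the universe\<close>
    (\<forall>a. cz M a \<in> univ M) \<and> (\<forall>l. cw M l \<in> univ M) \<and>
    \<comment> \<open>(1)\<close>
    infinite (Iset M) \<and>
    (\<forall>i\<in>univ M. \<forall>u\<in>univ M. memr M i u \<longrightarrow> Ir M i \<and> Kr M u) \<and>
    (\<forall>u\<in>Kset M. finite (mems M u) \<and> card (mems M u) = k) \<and>
    (\<forall>u\<in>Kset M. \<forall>v\<in>Kset M. mems M u = mems M v \<longrightarrow> u = v) \<and>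
    (\<forall>s. s \<subseteq> Iset M \<and> finite s \<and> card s = k \<longrightarrow> (\<exists>u\<in>Kset M. mems M u = s)) \<and>
    \<comment> \<open>(2)\<close>
    (\<forall>x\<in>univ M. \<not> (Ir M x \<and> Kr M x) \<and> \<not> (Ir M x \<and> Rr M x) \<and> \<not> (Ir M x \<and> Gar M x)
        \<and> \<not> (Ir M x \<and> Har M x) \<and> \<not> (Kr M x \<and> Rr M x) \<and> \<not> (Kr M x \<and> Gar M x)
        \<and> \<not> (Kr M x \<and> Har M x) \<and> \<not> (Rr M x \<and> Gar M x) \<and> \<not> (Rr M x \<and> Har M x)
        \<and> \<not> (Gar M x \<and> Har M x)) \<and>
    (\<forall>x\<in>univ M. Pr M x \<longleftrightarrow>
        (Ir M x \<or> Kr M x \<or> Rr M x \<or> Gar M x \<or> Har M x \<or> is_Z2const M x)) \<and>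
    \<comment> \<open>(3)\<close>
    (\<forall>l. Rr M (cw M l)) \<and>
    \<comment> \<open>(4)\<close>
    (\<forall>l\<in>univ M. \<forall>u\<in>univ M. \<forall>x\<in>univ M. Gbr M l u x \<longrightarrow> Rr M l \<and> Kr M u) \<and>
    (\<forall>u\<in>univ M. \<forall>x\<in>univ M. Hbr M u x \<longrightarrow> Kr M u) \<and>
    \<comment> \<open>(5)\<close>
    (\<forall>x\<in>univ M. \<not> Pr M x \<longrightarrow>
        (\<exists>l\<in>univ M. \<exists>u\<in>univ M. Gbr M l u x) \<or> (\<exists>u\<in>univ M. Hbr M u x)) \<and>
    (\<forall>l\<in>Rset M. \<forall>u\<in>Kset M. \<forall>v\<in>Kset M. \<forall>x\<in>univ M.
        \<not> (Pr M x \<and> Hbr M u x) \<and> \<not> (Pr M x \<and> Gbr M l v x) \<and> \<not> (Hbr M u x \<and> Gbr M l v x)) \<and>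
    \<comment> \<open>(6)\<close>
    (\<forall>u\<in>univ M. \<forall>a\<in>univ M. \<forall>z\<in>univ M. pir M u a z \<longrightarrow> Kr M u \<and> Gar M a \<and> is_Z2const M z) \<and>
    \<comment> \<open>(7)\<close>
    (\<forall>l\<in>univ M. \<forall>b\<in>univ M. \<forall>z\<in>univ M. rhor M l b z \<longrightarrow> Rr M l \<and> Har M b \<and> is_Z2const M z) \<and>
    \<comment> \<open>(8)\<close>
    (\<forall>l\<in>univ M. \<forall>u\<in>univ M. \<forall>a\<in>univ M. \<forall>v\<in>univ M. \<forall>w\<in>univ M. gr M l u a v w \<longrightarrow>
        Rr M l \<and> Kr M u \<and> Gar M a \<and> Gbr M l u v \<and> Gbr M l u w) \<and>
    \<comment> \<open>(9)\<close>
    (\<forall>u\<in>univ M. \<forall>b\<in>univ M. \<forall>x\<in>univ M. \<forall>y\<in>univ M. hr M u b x y \<longrightarrow>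
        Kr M u \<and> Har M b \<and> Hbr M u x \<and> Hbr M u y) \<and>
    \<comment> \<open>(10)\<close>
    cz M False \<noteq> cz M True \<and>
    (\<forall>a b. \<forall>z\<in>univ M. plusr M (cz M a) (cz M b) z \<longleftrightarrow> z = cz M (a \<noteq> b)) \<and>
    \<comment> \<open>(11)\<close>
    (\<forall>u\<in>Kset M. \<forall>a\<in>Gaset M. \<exists>!z. z \<in> univ M \<and> pir M u a z) \<and>
    (\<forall>a\<in>Gaset M. \<forall>a'\<in>Gaset M. (\<forall>u\<in>Kset M. projG M u a = projG M u a') \<longrightarrow> a = a') \<and>
    (\<forall>a\<in>Gaset M. \<forall>b\<in>Gaset M. \<forall>c\<in>Gaset M. plusr M a b c \<longleftrightarrow>
        (\<forall>u\<in>Kset M. projG M u c = (projG M u a \<noteq> projG M u b))) \<and>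
    (\<forall>a\<in>Gaset M. \<forall>b\<in>Gaset M. \<exists>c\<in>Gaset M. plusr M a b c) \<and>
    (\<forall>f\<in>fin_supp_on (Kset M). \<exists>a\<in>Gaset M. \<forall>u\<in>Kset M. projG M u a = f u) \<and>
    \<comment> \<open>(12)\<close>
    (\<forall>l\<in>Rset M. \<forall>b\<in>Haset M. \<exists>!z. z \<in> univ M \<and> rhor M l b z) \<and>
    (\<forall>b\<in>Haset M. \<forall>b'\<in>Haset M. (\<forall>l\<in>Rset M. projH M l b = projH M l b') \<longrightarrow> b = b') \<and>
    (\<forall>a\<in>Haset M. \<forall>b\<in>Haset M. \<forall>c\<in>Haset M. plusr M a b c \<longleftrightarrow>
        (\<forall>l\<in>Rset M. projH M l c = (projH M l a \<noteq> projH M l b))) \<and>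
    (\<forall>a\<in>Haset M. \<forall>b\<in>Haset M. \<exists>c\<in>Haset M. plusr M a b c) \<and>
    (\<forall>f\<in>fin_supp_on (Rset M). \<exists>b\<in>Haset M. \<forall>l\<in>Rset M. projH M l b = f l) \<and>
    \<comment> \<open>(13)\<close>
    (\<forall>l\<in>Rset M. \<forall>u\<in>Kset M.
        (\<exists>x\<in>univ M. Gbr M l u x) \<and>
        (\<forall>x\<in>univ M. Gbr M l u x \<longrightarrow>
            (\<forall>a\<in>Gaset M. \<exists>!y. y \<in> univ M \<and> gr M l u a x y) \<and>
            (\<forall>y\<in>univ M. Gbr M l u y \<longrightarrow> (\<exists>!a. a \<in> Gaset M \<and> gr M l u a x y)))) \<and>
    (\<forall>l\<in>univ M. \<forall>u\<in>univ M. \<forall>x\<in>univ M. \<forall>y\<in>univ M. \<forall>z\<in>univ M.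
        gr M l u x y z \<longrightarrow> gr M l u x z y) \<and>
    (\<forall>l\<in>univ M. \<forall>u\<in>univ M. \<forall>a\<in>univ M. \<forall>b\<in>univ M. \<forall>x\<in>univ M. \<forall>y\<in>univ M. \<forall>z\<in>univ M.
        gr M l u a x y \<and> gr M l u b y z \<longrightarrow>
        (\<forall>c\<in>Gaset M. plusr M a b c \<longrightarrow> gr M l u c x z)) \<and>
    \<comment> \<open>(14)\<close>
    (\<forall>u\<in>Kset M.
        (\<exists>x\<in>univ M. Hbr M u x) \<and>
        (\<forall>x\<in>univ M. Hbr M u x \<longrightarrow>
            (\<forall>b\<in>Haset M. \<exists>!y. y \<in> univ M \<and> hr M u b x y) \<and>
            (\<forall>y\<in>univ M. Hbr M u y \<longrightarrow> (\<exists>!b. b \<in> Haset M \<and> hr M u b x y)))) \<and>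
    (\<forall>u\<in>univ M. \<forall>x\<in>univ M. \<forall>y\<in>univ M. \<forall>z\<in>univ M. hr M u x y z \<longrightarrow> hr M u x z y) \<and>
    (\<forall>u\<in>univ M. \<forall>a\<in>univ M. \<forall>b\<in>univ M. \<forall>x\<in>univ M. \<forall>y\<in>univ M. \<forall>z\<in>univ M.
        hr M u a x y \<and> hr M u b y z \<longrightarrow>
        (\<forall>c\<in>Haset M. plusr M a b c \<longrightarrow> hr M u c x z)) \<and>
    \<comment> \<open>(15)\<close>
    (\<forall>l xs. length xs = Suc k \<and> set xs \<subseteq> univ M \<and> Qr M l xs \<longrightarrow>
        (\<exists>us. all_ksubsets k M us \<and>
              (\<forall>i<k. Gbr M (cw M l) (us i) (xs ! i)) \<and> Hbr M (us k) (xs ! k)) \<and>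
        (\<forall>\<sigma>. \<sigma> permutes {..<k} \<longrightarrow>
              Qr M l (map (\<lambda>i. xs ! \<sigma> i) [0..<k] @ [xs ! k]))) \<and>
    \<comment> \<open>(16)\<close>
    (\<forall>l xs u v x0' xk'. length xs = Suc k \<and> set xs \<subseteq> univ M \<and> u \<in> univ M \<and> v \<in> univ M
        \<and> x0' \<in> univ M \<and> xk' \<in> univ M \<and> Qr M l xs
        \<and> Gbr M (cw M l) u (xs ! 0) \<and> Hbr M v (xs ! k)
        \<and> Gbr M (cw M l) u x0' \<and> Hbr M v xk' \<longrightarrow>
        (\<forall>a\<in>univ M. gr M (cw M l) u a (xs ! 0) x0' \<longrightarrow>
            (Qr M l (x0' # tl xs) \<longleftrightarrow> pir M v a (cz M False))) \<and>
        (\<forall>b\<in>univ M. hr M v b (xs ! k) xk' \<longrightarrow>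
            (Qr M l (butlast xs @ [xk']) \<longleftrightarrow> rhor M (cw M l) b (cz M False)))) \<and>
    \<comment> \<open>(17)\<close>
    (\<forall>l. \<forall>u\<in>Kset M. \<forall>n. \<forall>i :: nat \<Rightarrow> 'a. \<forall>v :: nat \<Rightarrow> nat \<Rightarrow> 'a.
        \<forall>x :: nat \<Rightarrow> nat \<Rightarrow> 'a. \<forall>y :: nat \<Rightarrow> 'a.
        inj_on i {..<n} \<and> (\<forall>j<n. i j \<in> Iset M \<and> i j \<notin> mems M u) \<and>
        (\<forall>j<n. bij_betw (v j) {1..k}
             {w \<in> Kset M. mems M w \<subseteq> insert (i j) (mems M u) \<and> w \<noteq> u}) \<and>
        (\<forall>j<n. \<forall>m. 1 \<le> m \<and> m < k \<longrightarrow> x j m \<in> univ M \<and> Gbr M (cw M l) (v j m) (x j m)) \<and>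
        (\<forall>j<n. y j \<in> univ M \<and> Hbr M (v j k) (y j)) \<longrightarrow>
        (\<exists>z\<in>univ M. \<forall>j<n. Qr M l (z # map (x j) [1..<k] @ [y j])))"

definition models_phi :: "nat \<Rightarrow> 'a Lstr \<Rightarrow> bool" where
  "models_phi k M \<longleftrightarrow> models_T k M \<and>
    (\<forall>x\<in>Rset M. \<exists>l. x = cw M l) \<and>
    bij_betw (\<lambda>a u. u \<in> Kset M \<and> projG M u a) (Gaset M) (fin_supp_on (Kset M)) \<and>
    bij_betw (\<lambda>b l. projH M (cw M l) b) (Haset M) (fin_supp_on (UNIV :: nat set))"

definition substructure :: "nat \<Rightarrow> 'a Lstr \<Rightarrow> 'a Lstr \<Rightarrow> bool" where
  "substructure k M N \<longleftrightarrow>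
    univ M \<subseteq> univ N \<and> cz M = cz N \<and> cw M = cw N \<and>
    (\<forall>x\<in>univ M. Ir M x = Ir N x \<and> Kr M x = Kr N x \<and> Rr M x = Rr N x \<and> Pr M x = Pr N x
       \<and> Gar M x = Gar N x \<and> Har M x = Har N x) \<and>
    (\<forall>x\<in>univ M. \<forall>y\<in>univ M. memr M x y = memr N x y \<and> Hbr M x y = Hbr N x y) \<and>
    (\<forall>x\<in>univ M. \<forall>y\<in>univ M. \<forall>z\<in>univ M. pir M x y z = pir N x y z \<and> rhor M x y z = rhor N x y z
       \<and> plusr M x y z = plusr N x y z \<and> Gbr M x y z = Gbr N x y z) \<and>
    (\<forall>x\<in>univ M. \<forall>y\<in>univ M. \<forall>z\<in>univ M. \<forall>w\<in>univ M. hr M x y z w = hr N x y z w) \<and>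
    (\<forall>x\<in>univ M. \<forall>y\<in>univ M. \<forall>z\<in>univ M. \<forall>w\<in>univ M. \<forall>t\<in>univ M. gr M x y z w t = gr N x y z w t) \<and>
    (\<forall>l xs. length xs = Suc k \<and> set xs \<subseteq> univ M \<longrightarrow> Qr M l xs = Qr N l xs)"

text \<open>Index set (omega x K(M)) \<union> K(M), as a disjoint sum: Inl (l,u) and Inr u.\<close>
definition full_index :: "'a Lstr \<Rightarrow> ((nat \<times> 'a) + 'a) set" where
  "full_index M = {Inl (l, u) | l u. u \<in> Kset M} \<union> {Inr u | u. u \<in> Kset M}"

definition is_solution :: "nat \<Rightarrow> 'a Lstr \<Rightarrow> ((nat \<times> 'a) + 'a) set \<Rightarrow> ((nat \<times> 'a) + 'a \<Rightarrow> 'a) \<Rightarrow> bool" where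
  "is_solution k M W f \<longleftrightarrow>
     W \<subseteq> full_index M \<and>
     (\<forall>w\<in>W. f w \<in> univ M) \<and>
     (\<forall>l u. Inl (l, u) \<in> W \<longrightarrow> Gbr M (cw M l) u (f (Inl (l, u)))) \<and>
     (\<forall>u. Inr u \<in> W \<longrightarrow> Hbr M u (f (Inr u))) \<and>
     (\<forall>us l. all_ksubsets k M us \<and> (\<forall>i<k. Inl (l, us i) \<in> W) \<and> Inr (us k) \<in> W \<longrightarrow>
        Qr M l (map (\<lambda>i. f (Inl (l, us i))) [0..<k] @ [f (Inr (us k))]))"

definition has_solution :: "nat \<Rightarrow> 'a Lstr \<Rightarrow> bool" where
  "has_solution k M \<longleftrightarrow> (\<exists>f. is_solution k M (full_index M) f)"

end

theory Submission
  imports Defs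
begin

(* Let f be a solution of N. A value f(l,u), u in K(M), lies in the fibre G^b(c_l,u,-) of N, a
   G^a(N)-torsor that also contains a point x0 of M, say f(l,u) = x0 + a. As a is finitely
   supported, its restriction to K(M) is an element a' of G^a(M), so y = x0 + a' lies in M,
   and y differs from f(l,u) by a + a', which has zero projection at every point of K(M).
   Likewise each f(u) is moved into M by an element of H^a(N) with zero projection at every
   c_l. By (16), with the symmetry (15) bringing any of the first k coordinates to the front,
   such moves preserve Q_l on tuples indexed by the k-subsets of a (k+1)-subset of I(M); and
   Q_l of M is the restriction of Q_l of N. *)

(* The axioms of T used below, stated verbatim as in models_T_def so that conjunction
   elimination extracts them. *)
lemma models_TD:
  assumes "models_T k M"
  shows models_T_cz: "\<forall>a. cz M a \<in> univ M"
    and models_T_cw: "\<forall>l. cw M l \<in> univ M"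
    and models_T_cw_R: "\<forall>l. Rr M (cw M l)"
    and models_T_card_mems: "\<forall>u\<in>Kset M. finite (mems M u) \<and> card (mems M u) = k"
    and models_T_pi_sorts:
      "\<forall>u\<in>univ M. \<forall>a\<in>univ M. \<forall>z\<in>univ M. pir M u a z \<longrightarrow> Kr M u \<and> Gar M a \<and> is_Z2const M z"
    and models_T_rho_sorts:
      "\<forall>l\<in>univ M. \<forall>b\<in>univ M. \<forall>z\<in>univ M. rhor M l b z \<longrightarrow> Rr M l \<and> Har M b \<and> is_Z2const M z"
    and models_T_g_sorts:
      "\<forall>l\<in>univ M. \<forall>u\<in>univ M. \<forall>a\<in>univ M. \<forall>v\<in>univ M. \<forall>w\<in>univ M. gr M l u a v w \<longrightarrow>
        Rr M l \<and> Kr M u \<and> Gar M a \<and> Gbr M l u v \<and> Gbr M l u w"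
    and models_T_h_sorts:
      "\<forall>u\<in>univ M. \<forall>b\<in>univ M. \<forall>x\<in>univ M. \<forall>y\<in>univ M. hr M u b x y \<longrightarrow>
        Kr M u \<and> Har M b \<and> Hbr M u x \<and> Hbr M u y"
    and models_T_pi_total: "\<forall>u\<in>Kset M. \<forall>a\<in>Gaset M. \<exists>!z. z \<in> univ M \<and> pir M u a z"
    and models_T_Ga_plus:
      "\<forall>a\<in>Gaset M. \<forall>b\<in>Gaset M. \<forall>c\<in>Gaset M. plusr M a b c \<longleftrightarrow>
        (\<forall>u\<in>Kset M. projG M u c = (projG M u a \<noteq> projG M u b))"
    and models_T_Ga_plus_total: "\<forall>a\<in>Gaset M. \<forall>b\<in>Gaset M. \<exists>c\<in>Gaset M. plusr M a b c"
    and models_T_Ga_fin_supp: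
      "\<forall>f\<in>fin_supp_on (Kset M). \<exists>a\<in>Gaset M. \<forall>u\<in>Kset M. projG M u a = f u"
    and models_T_rho_total: "\<forall>l\<in>Rset M. \<forall>b\<in>Haset M. \<exists>!z. z \<in> univ M \<and> rhor M l b z"
    and models_T_Ha_plus:
      "\<forall>a\<in>Haset M. \<forall>b\<in>Haset M. \<forall>c\<in>Haset M. plusr M a b c \<longleftrightarrow>
        (\<forall>l\<in>Rset M. projH M l c = (projH M l a \<noteq> projH M l b))"
    and models_T_Ha_plus_total: "\<forall>a\<in>Haset M. \<forall>b\<in>Haset M. \<exists>c\<in>Haset M. plusr M a b c"
    and models_T_Ha_fin_supp:
      "\<forall>f\<in>fin_supp_on (Rset M). \<exists>b\<in>Haset M. \<forall>l\<in>Rset M. projH M l b = f l"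
    and models_T_Gb_torsor:
      "\<forall>l\<in>Rset M. \<forall>u\<in>Kset M.
        (\<exists>x\<in>univ M. Gbr M l u x) \<and>
        (\<forall>x\<in>univ M. Gbr M l u x \<longrightarrow>
            (\<forall>a\<in>Gaset M. \<exists>!y. y \<in> univ M \<and> gr M l u a x y) \<and>
            (\<forall>y\<in>univ M. Gbr M l u y \<longrightarrow> (\<exists>!a. a \<in> Gaset M \<and> gr M l u a x y)))"
    and models_T_g_add:
      "\<forall>l\<in>univ M. \<forall>u\<in>univ M. \<forall>a\<in>univ M. \<forall>b\<in>univ M. \<forall>x\<in>univ M. \<forall>y\<in>univ M. \<forall>z\<in>univ M.
        gr M l u a x y \<and> gr M l u b y z \<longrightarrow>
        (\<forall>c\<in>Gaset M. plusr M a b c \<longrightarrow> gr M l u c x z)"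
    and models_T_Hb_torsor:
      "\<forall>u\<in>Kset M.
        (\<exists>x\<in>univ M. Hbr M u x) \<and>
        (\<forall>x\<in>univ M. Hbr M u x \<longrightarrow>
            (\<forall>b\<in>Haset M. \<exists>!y. y \<in> univ M \<and> hr M u b x y) \<and>
            (\<forall>y\<in>univ M. Hbr M u y \<longrightarrow> (\<exists>!b. b \<in> Haset M \<and> hr M u b x y)))"
    and models_T_h_add:
      "\<forall>u\<in>univ M. \<forall>a\<in>univ M. \<forall>b\<in>univ M. \<forall>x\<in>univ M. \<forall>y\<in>univ M. \<forall>z\<in>univ M.
        hr M u a x y \<and> hr M u b y z \<longrightarrow>
        (\<forall>c\<in>Haset M. plusr M a b c \<longrightarrow> hr M u c x z)"
    and models_T_Q_symmetric:
      "\<forall>l xs. length xs = Suc k \<and> set xs \<subseteq> univ M \<and> Qr M l xs \<longrightarrow>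
        (\<exists>us. all_ksubsets k M us \<and>
              (\<forall>i<k. Gbr M (cw M l) (us i) (xs ! i)) \<and> Hbr M (us k) (xs ! k)) \<and>
        (\<forall>\<sigma>. \<sigma> permutes {..<k} \<longrightarrow>
              Qr M l (map (\<lambda>i. xs ! \<sigma> i) [0..<k] @ [xs ! k]))"
    and models_T_Q_shift:
      "\<forall>l xs u v x0' xk'. length xs = Suc k \<and> set xs \<subseteq> univ M \<and> u \<in> univ M \<and> v \<in> univ M
        \<and> x0' \<in> univ M \<and> xk' \<in> univ M \<and> Qr M l xs
        \<and> Gbr M (cw M l) u (xs ! 0) \<and> Hbr M v (xs ! k)
        \<and> Gbr M (cw M l) u x0' \<and> Hbr M v xk' \<longrightarrow>
        (\<forall>a\<in>univ M. gr M (cw M l) u a (xs ! 0) x0' \<longrightarrow>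
            (Qr M l (x0' # tl xs) \<longleftrightarrow> pir M v a (cz M False))) \<and>
        (\<forall>b\<in>univ M. hr M v b (xs ! k) xk' \<longrightarrow>
            (Qr M l (butlast xs @ [xk']) \<longleftrightarrow> rhor M (cw M l) b (cz M False)))"
  using assms[unfolded models_T_def] by - (elim conjE, assumption)+

lemma substructureD:
  assumes "substructure k M N"
  shows substructure_univ: "univ M \<subseteq> univ N"
    and substructure_cz: "cz M = cz N"
    and substructure_cw: "cw M = cw N"
    and substructure_unary: "x \<in> univ M \<Longrightarrow>
      Ir M x = Ir N x \<and> Kr M x = Kr N x \<and> Rr M x = Rr N x \<and> Gar M x = Gar N x \<and> Har M x = Har N x"
    and substructure_memr: "x \<in> univ M \<Longrightarrow> y \<in> univ M \<Longrightarrow> memr M x y = memr N x y"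
    and substructure_Hbr: "x \<in> univ M \<Longrightarrow> y \<in> univ M \<Longrightarrow> Hbr M x y = Hbr N x y"
    and substructure_pir: "x \<in> univ M \<Longrightarrow> y \<in> univ M \<Longrightarrow> z \<in> univ M \<Longrightarrow> pir M x y z = pir N x y z"
    and substructure_rhor: "x \<in> univ M \<Longrightarrow> y \<in> univ M \<Longrightarrow> z \<in> univ M \<Longrightarrow> rhor M x y z = rhor N x y z"
    and substructure_Gbr: "x \<in> univ M \<Longrightarrow> y \<in> univ M \<Longrightarrow> z \<in> univ M \<Longrightarrow> Gbr M x y z = Gbr N x y z"
    and substructure_hr: "x \<in> univ M \<Longrightarrow> y \<in> univ M \<Longrightarrow> z \<in> univ M \<Longrightarrow> w \<in> univ M \<Longrightarrow>
      hr M x y z w = hr N x y z w"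
    and substructure_gr: "x \<in> univ M \<Longrightarrow> y \<in> univ M \<Longrightarrow> z \<in> univ M \<Longrightarrow> w \<in> univ M \<Longrightarrow> t \<in> univ M \<Longrightarrow>
      gr M x y z w t = gr N x y z w t"
    and substructure_Qr: "length xs = Suc k \<Longrightarrow> set xs \<subseteq> univ M \<Longrightarrow> Qr M l xs = Qr N l xs"
  using assms unfolding substructure_def by simp_all

lemma substructure_sorts_subset:
  assumes "substructure k M N"
  shows "Kset M \<subseteq> Kset N" and "Rset M \<subseteq> Rset N" and "Iset M \<subseteq> Iset N"
    and "Gaset M \<subseteq> Gaset N" and "Haset M \<subseteq> Haset N"
  using substructure_univ[OF assms] substructure_unary[OF assms]
  by (auto simp: Kset_def Rset_def Iset_def Gaset_def Haset_def)

lemma substructure_projG: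
  assumes "models_T k M" "substructure k M N" "v \<in> univ M" "a \<in> univ M"
  shows "projG M v a = projG N v a"
  using assms substructure_pir[OF assms(2)] models_T_cz[OF assms(1)]
  by (simp add: projG_def flip: substructure_cz[OF assms(2)])

lemma substructure_projH:
  assumes "models_T k M" "substructure k M N" "r \<in> univ M" "b \<in> univ M"
  shows "projH M r b = projH N r b"
  using assms substructure_rhor[OF assms(2)] models_T_cz[OF assms(1)]
  by (simp add: projH_def flip: substructure_cz[OF assms(2)])

lemma cw_in_Rset:
  assumes "models_T k M"
  shows "cw M l \<in> Rset M"
  using models_T_cw[OF assms] models_T_cw_R[OF assms] by (simp add: Rset_def)

lemma pir_zero_if_not_projG:
  assumes T: "models_T k M" and u: "u \<in> Kset M" and a: "a \<in> Gaset M" and "\<not> projG M u a"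
  shows "pir M u a (cz M False)"
proof -
  obtain z where z: "z \<in> univ M" "pir M u a z"
    using models_T_pi_total[OF T] u a by blast
  then have "is_Z2const M z"
    using models_T_pi_sorts[OF T] u a by (auto simp: Kset_def Gaset_def)
  then show ?thesis
    using z \<open>\<not> projG M u a\<close> by (auto simp: is_Z2const_def projG_def)
qed

lemma rhor_zero_if_not_projH:
  assumes T: "models_T k M" and r: "r \<in> Rset M" and b: "b \<in> Haset M" and "\<not> projH M r b"
  shows "rhor M r b (cz M False)"
proof -
  obtain z where z: "z \<in> univ M" "rhor M r b z"
    using models_T_rho_total[OF T] r b by blast
  then have "is_Z2const M z"
    using models_T_rho_sorts[OF T] r b by (auto simp: Rset_def Haset_def)
  then show ?thesis
    using z \<open>\<not> projH M r b\<close> by (auto simp: is_Z2const_def projH_def)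
qed

lemma gr_compose:
  assumes T: "models_T k M" and l: "l \<in> univ M" and u: "u \<in> univ M"
    and a: "a \<in> Gaset M" and b: "b \<in> Gaset M"
    and x: "x \<in> univ M" and y: "y \<in> univ M" and z: "z \<in> univ M"
    and xy: "gr M l u a x y" and yz: "gr M l u b y z"
  shows "\<exists>c\<in>Gaset M. gr M l u c x z \<and> (\<forall>v\<in>Kset M. projG M v c = (projG M v a \<noteq> projG M v b))"
proof -
  obtain c where c: "c \<in> Gaset M" "plusr M a b c"
    using models_T_Ga_plus_total[OF T] a b by blast
  have "a \<in> univ M" "b \<in> univ M"
    using a b by (simp_all add: Gaset_def)
  then have "gr M l u c x z"
    using models_T_g_add[OF T, rule_format, OF l u _ _ x y z conjI[OF xy yz] c] by blast
  moreover have "\<forall>v\<in>Kset M. projG M v c = (projG M v a \<noteq> projG M v b)"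
    using models_T_Ga_plus[OF T] a b c by blast
  ultimately show ?thesis
    using c(1) by blast
qed

lemma hr_compose:
  assumes T: "models_T k M" and u: "u \<in> univ M" and a: "a \<in> Haset M" and b: "b \<in> Haset M"
    and x: "x \<in> univ M" and y: "y \<in> univ M" and z: "z \<in> univ M"
    and xy: "hr M u a x y" and yz: "hr M u b y z"
  shows "\<exists>c\<in>Haset M. hr M u c x z \<and> (\<forall>r\<in>Rset M. projH M r c = (projH M r a \<noteq> projH M r b))"
proof -
  obtain c where c: "c \<in> Haset M" "plusr M a b c"
    using models_T_Ha_plus_total[OF T] a b by blast
  have "a \<in> univ M" "b \<in> univ M"
    using a b by (simp_all add: Haset_def)
  then have "hr M u c x z"
    using models_T_h_add[OF T, rule_format, OF u _ _ x y z conjI[OF xy yz] c] by blast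
  moreover have "\<forall>r\<in>Rset M. projH M r c = (projH M r a \<noteq> projH M r b)"
    using models_T_Ha_plus[OF T] a b c by blast
  ultimately show ?thesis
    using c(1) by blast
qed

lemma Ga_restriction:
  assumes TM: "models_T k M" and PN: "models_phi k N" and S: "substructure k M N"
    and a: "a \<in> Gaset N"
  shows "\<exists>a'\<in>Gaset M. \<forall>v\<in>Kset M. projG M v a' = projG N v a"
proof -
  have "(\<lambda>v. v \<in> Kset N \<and> projG N v a) \<in> fin_supp_on (Kset N)"
    using PN a unfolding models_phi_def by (meson bij_betwE)
  then have "finite {v. v \<in> Kset N \<and> projG N v a}"
    by (simp add: fin_supp_on_def)
  moreover have "{v. v \<in> Kset M \<and> projG N v a} \<subseteq> {v. v \<in> Kset N \<and> projG N v a}"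
    using substructure_sorts_subset(1)[OF S] by blast
  ultimately have "(\<lambda>v. v \<in> Kset M \<and> projG N v a) \<in> fin_supp_on (Kset M)"
    unfolding fin_supp_on_def by (auto intro: finite_subset)
  from bspec[OF models_T_Ga_fin_supp[OF TM] this] show ?thesis
    by auto
qed

lemma Ha_restriction:
  assumes TM: "models_T k M" and PN: "models_phi k N" and S: "substructure k M N"
    and b: "b \<in> Haset N"
  shows "\<exists>b'\<in>Haset M. \<forall>r\<in>Rset M. projH M r b' = projH N r b"
proof -
  have "(\<lambda>l. projH N (cw N l) b) \<in> fin_supp_on UNIV"
    using PN b unfolding models_phi_def by (meson bij_betwE)
  then have "finite (cw N ` {l. projH N (cw N l) b})"
    by (simp add: fin_supp_on_def)
  moreover have "Rset N \<subseteq> range (cw N)"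
    using PN by (auto simp: models_phi_def)
  then have "{r. r \<in> Rset M \<and> projH N r b} \<subseteq> cw N ` {l. projH N (cw N l) b}"
    using substructure_sorts_subset(2)[OF S] by blast
  ultimately have "(\<lambda>r. r \<in> Rset M \<and> projH N r b) \<in> fin_supp_on (Rset M)"
    unfolding fin_supp_on_def by (auto intro: finite_subset)
  from bspec[OF models_T_Ha_fin_supp[OF TM] this] show ?thesis
    by auto
qed

(* y = x + a in the torsor G^b(c_l,u,-) (resp. H^b(u,-)) for an a whose projections on V
   (resp. at c_l for l in L) vanish: by (16) such moves of a coordinate preserve Q_l. *)
definition Gb_diff_vanishes_on :: "'a Lstr \<Rightarrow> 'a set \<Rightarrow> nat \<Rightarrow> 'a \<Rightarrow> 'a \<Rightarrow> 'a \<Rightarrow> bool" where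
  "Gb_diff_vanishes_on N V l u x y \<longleftrightarrow>
     (\<exists>a\<in>univ N. gr N (cw N l) u a x y \<and> (\<forall>v\<in>V. pir N v a (cz N False)))"

definition Hb_diff_vanishes_on :: "'a Lstr \<Rightarrow> nat set \<Rightarrow> 'a \<Rightarrow> 'a \<Rightarrow> 'a \<Rightarrow> bool" where
  "Hb_diff_vanishes_on N L u x y \<longleftrightarrow>
     (\<exists>b\<in>univ N. hr N u b x y \<and> (\<forall>l\<in>L. rhor N (cw N l) b (cz N False)))"

lemma Gb_diff_vanishes_onD:
  assumes T: "models_T k N" and "u \<in> univ N" "x \<in> univ N" "y \<in> univ N"
    and "Gb_diff_vanishes_on N V l u x y"
  shows "Gbr N (cw N l) u x" and "Gbr N (cw N l) u y"
  using assms(2-) models_T_g_sorts[OF T] models_T_cw[OF T]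
  unfolding Gb_diff_vanishes_on_def by blast+

lemma Hb_diff_vanishes_onD:
  assumes T: "models_T k N" and "u \<in> univ N" "x \<in> univ N" "y \<in> univ N"
    and "Hb_diff_vanishes_on N L u x y"
  shows "Hbr N u x" and "Hbr N u y"
  using assms(2-) models_T_h_sorts[OF T]
  unfolding Hb_diff_vanishes_on_def by blast+

lemma Gb_diff_vanishes_on_compose:
  assumes T: "models_T k N" and u: "u \<in> univ N" and a: "a \<in> Gaset N" and a': "a' \<in> Gaset N"
    and x: "x \<in> univ N" and x0: "x0 \<in> univ N" and y: "y \<in> univ N"
    and x_x0: "gr N (cw N l) u a x x0" and x0_y: "gr N (cw N l) u a' x0 y"
    and V: "V \<subseteq> Kset N" and agree: "\<forall>v\<in>V. projG N v a' = projG N v a"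
  shows "Gb_diff_vanishes_on N V l u x y"
proof -
  obtain c where c: "c \<in> Gaset N" "gr N (cw N l) u c x y"
    and c_proj: "\<forall>v\<in>Kset N. projG N v c = (projG N v a \<noteq> projG N v a')"
    using gr_compose[OF T _ u a a' x x0 y x_x0 x0_y] models_T_cw[OF T] by blast
  have "pir N v c (cz N False)" if "v \<in> V" for v
    using pir_zero_if_not_projG[OF T _ c(1)] c_proj agree V that by blast
  then show ?thesis
    using c unfolding Gb_diff_vanishes_on_def by (auto simp: Gaset_def)
qed

lemma Hb_diff_vanishes_on_compose:
  assumes T: "models_T k N" and u: "u \<in> univ N" and b: "b \<in> Haset N" and b': "b' \<in> Haset N"
    and x: "x \<in> univ N" and x0: "x0 \<in> univ N" and y: "y \<in> univ N"
    and x_x0: "hr N u b x x0" and x0_y: "hr N u b' x0 y"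
    and agree: "\<forall>l\<in>L. projH N (cw N l) b' = projH N (cw N l) b"
  shows "Hb_diff_vanishes_on N L u x y"
proof -
  obtain c where c: "c \<in> Haset N" "hr N u c x y"
    and c_proj: "\<forall>r\<in>Rset N. projH N r c = (projH N r b \<noteq> projH N r b')"
    using hr_compose[OF T u b b' x x0 y x_x0 x0_y] by blast
  have "rhor N (cw N l) c (cz N False)" if "l \<in> L" for l
    using rhor_zero_if_not_projH[OF T cw_in_Rset[OF T] c(1)] c_proj cw_in_Rset[OF T] agree that
    by blast
  then show ?thesis
    using c unfolding Hb_diff_vanishes_on_def by (auto simp: Haset_def)
qed

lemma Gb_approximation_in_substructure:
  assumes TM: "models_T k M" and PN: "models_phi k N" and S: "substructure k M N"
    and u: "u \<in> Kset M" and x: "x \<in> univ N" and xG: "Gbr N (cw N l) u x"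
  shows "\<exists>y\<in>univ M. Gbr M (cw M l) u y \<and> Gb_diff_vanishes_on N (Kset M) l u x y"
proof -
  have TN: "models_T k N"
    using PN by (simp add: models_phi_def)
  note MN = substructure_univ[OF S] substructure_sorts_subset[OF S]
  have cw: "cw M l = cw N l"
    using substructure_cw[OF S] by simp
  have uM: "u \<in> univ M" and uN: "u \<in> Kset N" "u \<in> univ N"
    using u MN by (auto simp: Kset_def)
  have lM: "cw M l \<in> Rset M" and lN: "cw N l \<in> Rset N"
    using cw_in_Rset[OF TM] cw_in_Rset[OF TN] by auto
  then have clM: "cw M l \<in> univ M"
    by (simp add: Rset_def)
  obtain x0 where x0: "x0 \<in> univ M" "Gbr M (cw M l) u x0"
    using models_T_Gb_torsor[OF TM] lM u by blast
  then have x0N: "x0 \<in> univ N" "Gbr N (cw N l) u x0"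
    using MN substructure_Gbr[OF S clM uM] cw by auto
  obtain a where a: "a \<in> Gaset N" "gr N (cw N l) u a x x0"
    using models_T_Gb_torsor[OF TN] lN uN x xG x0N by blast
  obtain a' where a': "a' \<in> Gaset M" "\<forall>v\<in>Kset M. projG M v a' = projG N v a"
    using Ga_restriction[OF TM PN S a(1)] by blast
  then have a'M: "a' \<in> univ M" and a'N: "a' \<in> Gaset N"
    using MN by (auto simp: Gaset_def)
  obtain y where y: "y \<in> univ M" "gr M (cw M l) u a' x0 y"
    using models_T_Gb_torsor[OF TM] lM u x0 a'(1) by blast
  then have yG: "Gbr M (cw M l) u y"
    using models_T_g_sorts[OF TM] clM uM a'M x0(1) by blast
  have yN: "y \<in> univ N" "gr N (cw N l) u a' x0 y"
    using y MN substructure_gr[OF S clM uM a'M x0(1) y(1)] cw by auto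
  have "\<forall>v\<in>Kset M. projG N v a' = projG N v a"
    using a'(2) substructure_projG[OF TM S _ a'M] by (simp add: Kset_def)
  then have "Gb_diff_vanishes_on N (Kset M) l u x y"
    using Gb_diff_vanishes_on_compose[OF TN uN(2) a(1) a'N x x0N(1) yN(1) a(2) yN(2) MN(2)]
    by blast
  then show ?thesis
    using y(1) yG by blast
qed

lemma Hb_approximation_in_substructure:
  assumes TM: "models_T k M" and PN: "models_phi k N" and S: "substructure k M N"
    and u: "u \<in> Kset M" and x: "x \<in> univ N" and xH: "Hbr N u x"
  shows "\<exists>y\<in>univ M. Hbr M u y \<and> Hb_diff_vanishes_on N UNIV u x y"
proof -
  have TN: "models_T k N"
    using PN by (simp add: models_phi_def)
  note MN = substructure_univ[OF S] substructure_sorts_subset[OF S]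
  have uM: "u \<in> univ M" and uN: "u \<in> Kset N" "u \<in> univ N"
    using u MN by (auto simp: Kset_def)
  obtain x0 where x0: "x0 \<in> univ M" "Hbr M u x0"
    using models_T_Hb_torsor[OF TM] u by blast
  then have x0N: "x0 \<in> univ N" "Hbr N u x0"
    using MN substructure_Hbr[OF S uM] by auto
  obtain b where b: "b \<in> Haset N" "hr N u b x x0"
    using models_T_Hb_torsor[OF TN] uN x xH x0N by blast
  obtain b' where b': "b' \<in> Haset M" "\<forall>r\<in>Rset M. projH M r b' = projH N r b"
    using Ha_restriction[OF TM PN S b(1)] by blast
  then have b'M: "b' \<in> univ M" and b'N: "b' \<in> Haset N"
    using MN by (auto simp: Haset_def)
  obtain y where y: "y \<in> univ M" "hr M u b' x0 y"
    using models_T_Hb_torsor[OF TM] u x0 b'(1) by blast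
  then have yH: "Hbr M u y"
    using models_T_h_sorts[OF TM] uM b'M x0(1) by blast
  have yN: "y \<in> univ N" "hr N u b' x0 y"
    using y MN substructure_hr[OF S uM b'M x0(1) y(1)] by auto
  have "projH N (cw N l) b' = projH N (cw N l) b" for l
    using b'(2) cw_in_Rset[OF TM] substructure_projH[OF TM S _ b'M] substructure_cw[OF S]
    by (simp add: Rset_def)
  then have "Hb_diff_vanishes_on N UNIV u x y"
    using Hb_diff_vanishes_on_compose[OF TN uN(2) b(1) b'N x x0N(1) yN(1) b(2) yN(2)] by blast
  then show ?thesis
    using y(1) yH by blast
qed

lemma permute_list_list_update:
  assumes "f permutes {..<length xs}" and "j < length xs"
  shows "permute_list f (xs[f j := x]) = (permute_list f xs)[j := x]"
proof (rule nth_equalityI)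
  fix i
  assume "i < length (permute_list f (xs[f j := x]))"
  then have i: "i < length xs"
    by simp
  have "f j = f i \<longleftrightarrow> j = i"
    using permutes_inj[OF assms(1)] by (auto dest: injD)
  moreover have "f i < length xs"
    using permutes_in_image[OF assms(1)] i by simp
  ultimately show "permute_list f (xs[f j := x]) ! i = (permute_list f xs)[j := x] ! i"
    using assms i by (simp add: permute_list_nth nth_list_update permutes_in_image)
qed simp

lemma Qr_permute_list:
  assumes T: "models_T k M" and len: "length xs = Suc k" and xs: "set xs \<subseteq> univ M"
    and Q: "Qr M l xs" and \<sigma>: "\<sigma> permutes {..<k}"
  shows "Qr M l (permute_list \<sigma> xs)"
proof -
  have "permute_list \<sigma> xs = map (\<lambda>i. xs ! \<sigma> i) [0..<k] @ [xs ! k]"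
    using len permutes_not_in[OF \<sigma>, of k] by (simp add: permute_list_def)
  then show ?thesis
    using models_T_Q_symmetric[OF T] len xs Q \<sigma> by simp
qed

lemma Qr_update_Gb:
  assumes T: "models_T k N" and Q: "Qr N l xs" and len: "length xs = Suc k"
    and xs: "set xs \<subseteq> univ N" and m: "m < k" and x': "x' \<in> univ N"
    and u: "u \<in> univ N" and v: "v \<in> univ N" "v \<in> V" and Hv: "Hbr N v (xs ! k)"
    and diff: "Gb_diff_vanishes_on N V l u (xs ! m) x'"
  shows "Qr N l (xs[m := x'])"
proof -
  \<comment> \<open>(16) only moves the first coordinate; conjugate by the transposition of 0 and m.\<close>
  define \<sigma> where "\<sigma> = transpose 0 m"
  have \<sigma>: "\<sigma> permutes {..<k}"
    using m by (simp add: \<sigma>_def permutes_swap_id)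
  then have \<sigma>_len: "\<sigma> permutes {..<length xs}"
    using len by (auto intro: permutes_subset)
  define ys where "ys = permute_list \<sigma> xs"
  have ys: "length ys = Suc k" "set ys \<subseteq> univ N" "ys ! 0 = xs ! m" "ys ! k = xs ! k"
    using \<sigma>_len len xs m by (simp_all add: ys_def permute_list_nth \<sigma>_def)
  have "Qr N l ys"
    unfolding ys_def by (rule Qr_permute_list[OF T len xs Q \<sigma>])
  obtain a where a: "a \<in> univ N" "gr N (cw N l) u a (xs ! m) x'" "pir N v a (cz N False)"
    using diff v(2) by (auto simp: Gb_diff_vanishes_on_def)
  have xs_in: "xs ! m \<in> univ N" "xs ! k \<in> univ N"
    using xs len m by (simp_all add: subset_iff)
  then have "Gbr N (cw N l) u (xs ! m)" "Gbr N (cw N l) u x'"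
    using Gb_diff_vanishes_onD[OF T u _ x' diff] by blast+
  then have "Qr N l (x' # tl ys)"
    using models_T_Q_shift[OF T, rule_format, where l = l and xs = ys and u = u and v = v
        and x0' = x' and xk' = "xs ! k"] ys \<open>Qr N l ys\<close>
      u v(1) x' xs_in Hv a by auto
  also have "x' # tl ys = ys[0 := x']"
    using ys(1) by (cases ys) auto
  also have "\<dots> = permute_list \<sigma> (xs[m := x'])"
    using permute_list_list_update[OF \<sigma>_len, of 0 x'] len by (simp add: ys_def \<sigma>_def)
  finally have Q': "Qr N l (permute_list \<sigma> (xs[m := x']))" .
  have "set (xs[m := x']) \<subseteq> univ N"
    using set_update_subset_insert[of xs m x'] xs x' by blast
  then have "Qr N l (permute_list \<sigma> (permute_list \<sigma> (xs[m := x'])))"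
    by (intro Qr_permute_list[OF T _ _ Q' \<sigma>]) (use \<sigma>_len len in simp_all)
  also have "permute_list \<sigma> (permute_list \<sigma> (xs[m := x'])) = xs[m := x']"
    using permute_list_compose[of \<sigma> "xs[m := x']" \<sigma>] \<sigma>_len by (simp add: \<sigma>_def)
  finally show ?thesis .
qed

lemma Qr_update_Hb:
  assumes T: "models_T k N" and Q: "Qr N l xs" and len: "length xs = Suc k"
    and xs: "set xs \<subseteq> univ N" and y': "y' \<in> univ N"
    and u: "u \<in> univ N" and v: "v \<in> univ N" and Gu: "Gbr N (cw N l) u (xs ! 0)"
    and diff: "Hb_diff_vanishes_on N L v (xs ! k) y'" and l: "l \<in> L"
  shows "Qr N l (xs[k := y'])"
proof -
  obtain b where b: "b \<in> univ N" "hr N v b (xs ! k) y'" "rhor N (cw N l) b (cz N False)"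
    using diff l by (auto simp: Hb_diff_vanishes_on_def)
  have xs_in: "xs ! 0 \<in> univ N" "xs ! k \<in> univ N"
    using xs len by (simp_all add: subset_iff)
  then have "Hbr N v (xs ! k)" "Hbr N v y'"
    using Hb_diff_vanishes_onD[OF T v _ y' diff] by blast+
  then have "Qr N l (butlast xs @ [y'])"
    using models_T_Q_shift[OF T, rule_format, where l = l and xs = xs and u = u and v = v
        and x0' = "xs ! 0" and xk' = y'] len xs Q u v y' xs_in Gu b
    by auto
  also have "butlast xs @ [y'] = xs[k := y']"
  proof -
    have "xs = butlast xs @ [xs ! k]"
      using len append_butlast_last_id[of xs] last_conv_nth[of xs] by fastforce
    moreover have "length (butlast xs) = k"
      using len by simp
    ultimately show ?thesis
      by (metis list_update_length)
  qed
  finally show ?thesis .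
qed

lemma take_Suc_append_drop_Suc:
  assumes "m < length xs" and "length ys = length xs"
  shows "take (Suc m) ys @ drop (Suc m) xs = (take m ys @ drop m xs)[m := ys ! m]"
proof -
  have "drop m xs = xs ! m # drop (Suc m) xs"
    using assms(1) by (rule Cons_nth_drop_Suc[symmetric])
  moreover have "take (Suc m) ys = take m ys @ [ys ! m]"
    using assms by (simp add: take_Suc_conv_app_nth)
  ultimately show ?thesis
    using assms by (simp add: list_update_append)
qed

lemma Qr_replace_coordinates:
  assumes T: "models_T k N" and k: "0 < k" and Q: "Qr N l xs"
    and len: "length xs = Suc k" "length ys = Suc k"
    and xs: "set xs \<subseteq> univ N" and ys: "set ys \<subseteq> univ N" and us: "\<forall>i\<le>k. us i \<in> univ N"
    and G: "\<forall>i<k. Gb_diff_vanishes_on N V l (us i) (xs ! i) (ys ! i)" and V: "us k \<in> V"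
    and H: "Hb_diff_vanishes_on N L (us k) (xs ! k) (ys ! k)" and L: "l \<in> L"
  shows "Qr N l ys"
proof -
  have us_in: "us i \<in> univ N" and xs_in: "xs ! i \<in> univ N" and ys_in: "ys ! i \<in> univ N"
    if "i \<le> k" for i
    using that us xs ys len by (simp_all add: subset_iff)
  have Hk: "Hbr N (us k) (xs ! k)"
    using Hb_diff_vanishes_onD(1)[OF T us_in xs_in ys_in H] by simp
  have G0: "Gbr N (cw N l) (us 0) (ys ! 0)"
    using Gb_diff_vanishes_onD(2)[OF T us_in[of 0] xs_in[of 0] ys_in[of 0]] G k by blast
  define zs where "zs m = take m ys @ drop m xs" for m
  have zs_len: "length (zs m) = Suc k" for m
    using len by (simp add: zs_def)
  have zs_in: "set (zs m) \<subseteq> univ N" for m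
    using xs ys by (auto simp: zs_def dest: in_set_takeD in_set_dropD)
  have zs_nth: "zs m ! i = (if i < m then ys ! i else xs ! i)" if "i \<le> k" for m i
    using that len by (simp add: zs_def nth_append)
  have "Qr N l (zs m)" if "m \<le> Suc k" for m
    using that
  proof (induction m)
    case 0
    then show ?case
      using Q by (simp add: zs_def)
  next
    case (Suc m)
    then have IH: "Qr N l (zs m)" and m: "m \<le> k"
      by simp_all
    have zs_Suc: "zs (Suc m) = (zs m)[m := ys ! m]"
      unfolding zs_def using m len by (simp add: take_Suc_append_drop_Suc)
    show ?case
    proof (cases "m < k")
      case True
      have "Qr N l ((zs m)[m := ys ! m])"
        by (rule Qr_update_Gb[OF T IH zs_len zs_in True ys_in[OF m] us_in[OF m] us_in[OF order_refl] V])
          (use Hk G True in \<open>simp_all add: zs_nth\<close>)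
      then show ?thesis
        by (simp add: zs_Suc)
    next
      case False
      then have "m = k"
        using m by simp
      have "Qr N l ((zs m)[k := ys ! k])"
        by (rule Qr_update_Hb[OF T IH zs_len zs_in ys_in[OF order_refl] us_in[of 0] us_in[OF order_refl] _ _ L])
          (use G0 H k \<open>m = k\<close> in \<open>simp_all add: zs_nth\<close>)
      then show ?thesis
        using \<open>m = k\<close> zs_Suc by simp
    qed
  qed
  from this[of "Suc k"] show ?thesis
    using len by (simp add: zs_def)
qed

lemma mems_substructure:
  assumes TM: "models_T k M" and TN: "models_T k N" and S: "substructure k M N"
    and u: "u \<in> Kset M"
  shows "mems M u = mems N u"
proof -
  have uM: "u \<in> univ M" and uN: "u \<in> Kset N"
    using u substructure_sorts_subset(1)[OF S] by (auto simp: Kset_def)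
  have "mems M u \<subseteq> mems N u"
    using substructure_univ[OF S] substructure_memr[OF S _ uM] by (auto simp: mems_def)
  moreover have "finite (mems N u)" "card (mems M u) = card (mems N u)"
    using models_T_card_mems[OF TM] models_T_card_mems[OF TN] u uN by auto
  ultimately show ?thesis
    using card_subset_eq by blast
qed

lemma all_ksubsets_substructure:
  assumes TM: "models_T k M" and TN: "models_T k N" and S: "substructure k M N"
    and A: "all_ksubsets k M us"
  shows "all_ksubsets k N us"
proof -
  have us: "\<forall>i\<le>k. us i \<in> Kset M"
    using A by (simp add: all_ksubsets_def)
  obtain s where s: "s \<subseteq> Iset M" "finite s" "card s = Suc k"
    and bij: "bij_betw (\<lambda>i. mems M (us i)) {..k} {t. t \<subseteq> s \<and> card t = k}"
    using A unfolding all_ksubsets_def by blast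
  have "bij_betw (\<lambda>i. mems N (us i)) {..k} {t. t \<subseteq> s \<and> card t = k}"
    using bij by (rule bij_betw_cong[THEN iffD1, rotated])
      (use mems_substructure[OF TM TN S] us in auto)
  moreover have "s \<subseteq> Iset N"
    using s(1) substructure_sorts_subset(3)[OF S] by blast
  moreover have "\<forall>i\<le>k. us i \<in> Kset N"
    using us substructure_sorts_subset(1)[OF S] by blast
  ultimately show ?thesis
    unfolding all_ksubsets_def using s(2,3) by blast
qed

definition approximates_at :: "'a Lstr \<Rightarrow> 'a Lstr \<Rightarrow> (nat \<times> 'a) + 'a \<Rightarrow> 'a \<Rightarrow> 'a \<Rightarrow> bool" where
  "approximates_at M N w y x \<longleftrightarrow> y \<in> univ M \<and>
     (case w of
        Inl (l, u) \<Rightarrow> Gbr M (cw M l) u y \<and> Gb_diff_vanishes_on N (Kset M) l u x y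
      | Inr u \<Rightarrow> Hbr M u y \<and> Hb_diff_vanishes_on N UNIV u x y)"

lemma approximates_at_exists:
  assumes TM: "models_T k M" and PN: "models_phi k N" and S: "substructure k M N"
    and f: "is_solution k N (full_index N) f" and w: "w \<in> full_index M"
  shows "\<exists>y. approximates_at M N w y (f w)"
proof -
  have "w \<in> full_index N"
    using w substructure_sorts_subset(1)[OF S] by (auto simp: full_index_def)
  then have fw: "f w \<in> univ N"
    and fG: "\<And>l u. w = Inl (l, u) \<Longrightarrow> Gbr N (cw N l) u (f w)"
    and fH: "\<And>u. w = Inr u \<Longrightarrow> Hbr N u (f w)"
    using f by (auto simp: is_solution_def)
  from w consider (Inl) l u where "w = Inl (l, u)" "u \<in> Kset M"
    | (Inr) u where "w = Inr u" "u \<in> Kset M"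
    by (auto simp: full_index_def)
  then show ?thesis
  proof cases
    case Inl
    then show ?thesis
      using Gb_approximation_in_substructure[OF TM PN S _ fw fG] by (auto simp: approximates_at_def)
  next
    case Inr
    then show ?thesis
      using Hb_approximation_in_substructure[OF TM PN S _ fw fH] by (auto simp: approximates_at_def)
  qed
qed

definition solution_tuple :: "nat \<Rightarrow> nat \<Rightarrow> (nat \<Rightarrow> 'a) \<Rightarrow> ((nat \<times> 'a) + 'a \<Rightarrow> 'a) \<Rightarrow> 'a list" where
  "solution_tuple k l us g = map (\<lambda>i. g (Inl (l, us i))) [0..<k] @ [g (Inr (us k))]"

lemma length_solution_tuple [simp]: "length (solution_tuple k l us g) = Suc k"
  by (simp add: solution_tuple_def)

lemma nth_solution_tuple:
  "i \<le> k \<Longrightarrow> solution_tuple k l us g ! i = (if i < k then g (Inl (l, us i)) else g (Inr (us k)))"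
  by (simp add: solution_tuple_def nth_append)

lemma set_solution_tuple:
  "set (solution_tuple k l us g) = (\<lambda>i. g (Inl (l, us i))) ` {..<k} \<union> {g (Inr (us k))}"
  by (auto simp: solution_tuple_def)

lemma Qr_solution_tuple_approximation:
  assumes TM: "models_T k M" and TN: "models_T k N" and S: "substructure k M N" and k: "0 < k"
    and f: "is_solution k N (full_index N) f"
    and F: "\<forall>w\<in>full_index M. approximates_at M N w (F w) (f w)"
    and A: "all_ksubsets k M us"
  shows "Qr M l (solution_tuple k l us F)"
proof -
  have AN: "all_ksubsets k N us" and us: "\<forall>i\<le>k. us i \<in> Kset M"
    using all_ksubsets_substructure[OF TM TN S A] A by (simp_all add: all_ksubsets_def)
  then have usN: "\<forall>i\<le>k. us i \<in> univ N"
    using substructure_sorts_subset(1)[OF S] by (auto simp: Kset_def)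
  have idxM: "Inl (l, us i) \<in> full_index M" "Inr (us i) \<in> full_index M" if "i \<le> k" for i
    using us that by (auto simp: full_index_def)
  have idxN: "Inl (l, us i) \<in> full_index N" "Inr (us i) \<in> full_index N" if "i \<le> k" for i
    using AN that by (auto simp: full_index_def all_ksubsets_def)
  have fN: "f w \<in> univ N" if "w \<in> full_index N" for w
    using f that by (simp add: is_solution_def)
  have FG: "F (Inl (l, us i)) \<in> univ M \<and>
      Gb_diff_vanishes_on N (Kset M) l (us i) (f (Inl (l, us i))) (F (Inl (l, us i)))" if "i \<le> k" for i
    using bspec[OF F idxM(1)[OF that]] by (simp add: approximates_at_def)
  have FH: "F (Inr (us k)) \<in> univ M \<and>
      Hb_diff_vanishes_on N UNIV (us k) (f (Inr (us k))) (F (Inr (us k)))"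
    using bspec[OF F idxM(2)[OF order_refl]] by (simp add: approximates_at_def)
  have FM: "set (solution_tuple k l us F) \<subseteq> univ M"
    using FG FH by (auto simp: set_solution_tuple)
  have "Qr N l (solution_tuple k l us F)"
  proof (rule Qr_replace_coordinates[OF TN k _ length_solution_tuple length_solution_tuple _ _ usN])
    show "Qr N l (solution_tuple k l us f)"
      using f AN idxN unfolding solution_tuple_def is_solution_def by simp
    show "set (solution_tuple k l us f) \<subseteq> univ N"
      using fN idxN by (auto simp: set_solution_tuple)
    show "set (solution_tuple k l us F) \<subseteq> univ N"
      using FM substructure_univ[OF S] by blast
    show "\<forall>i<k. Gb_diff_vanishes_on N (Kset M) l (us i)
        (solution_tuple k l us f ! i) (solution_tuple k l us F ! i)"
      using FG by (simp add: nth_solution_tuple)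
    show "Hb_diff_vanishes_on N UNIV (us k) (solution_tuple k l us f ! k) (solution_tuple k l us F ! k)"
      using FH by (simp add: nth_solution_tuple)
  qed (use us in simp_all)
  then show ?thesis
    using substructure_Qr[OF S length_solution_tuple FM] by simp
qed

lemma is_solution_of_approximation:
  assumes TM: "models_T k M" and TN: "models_T k N" and S: "substructure k M N" and k: "0 < k"
    and f: "is_solution k N (full_index N) f"
    and F: "\<forall>w\<in>full_index M. approximates_at M N w (F w) (f w)"
  shows "is_solution k M (full_index M) F"
  unfolding is_solution_def
proof (intro conjI allI impI ballI subset_refl)
  fix w
  assume "w \<in> full_index M"
  then show "F w \<in> univ M"
    using F by (simp add: approximates_at_def)
next
  fix l u
  assume "Inl (l, u) \<in> full_index M"
  then show "Gbr M (cw M l) u (F (Inl (l, u)))"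
    using F by (fastforce simp: approximates_at_def)
next
  fix u
  assume "Inr u \<in> full_index M"
  then show "Hbr M u (F (Inr u))"
    using F by (fastforce simp: approximates_at_def)
next
  fix us l
  assume "all_ksubsets k M us \<and> (\<forall>i<k. Inl (l, us i) \<in> full_index M) \<and> Inr (us k) \<in> full_index M"
  then show "Qr M l (map (\<lambda>i. F (Inl (l, us i))) [0..<k] @ [F (Inr (us k))])"
    using Qr_solution_tuple_approximation[OF TM TN S k f F] by (simp add: solution_tuple_def)
qed

theorem mainTheorem9:
  fixes k :: nat and M N :: "'a Lstr"
  assumes "k > 1"
    and "models_phi k M"
    and "models_phi k N"
    and "substructure k M N"
    and "has_solution k N"
  shows "has_solution k M"
proof -
  have TM: "models_T k M" and TN: "models_T k N"
    using assms(2,3) by (simp_all add: models_phi_def)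
  obtain f where f: "is_solution k N (full_index N) f"
    using assms(5) by (auto simp: has_solution_def)
  have "\<forall>w\<in>full_index M. \<exists>y. approximates_at M N w y (f w)"
    using approximates_at_exists[OF TM assms(3,4) f] by blast
  then obtain F where "\<forall>w\<in>full_index M. approximates_at M N w (F w) (f w)"
    by metis
  then have "is_solution k M (full_index M) F"
    using is_solution_of_approximation[OF TM TN assms(4) _ f] assms(1) by simp
  then show ?thesis
    by (auto simp: has_solution_def)
qed

end
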